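(* In the setting below (the extended process built from a semi-Markov process satisfying conditions (i)–(v)), for each $1\le i\le\overline M$ there is a function $\overline\tau^\varepsilon_i$ such that $\lim_{\varepsilon\to0}\mathbb E\big(\overline T^\varepsilon(\bar x,\overline S_j)\big)/\overline\tau^\varepsilon_i=1$ uniformly in $\bar x\in\overline S_i$ for every $1\le j\le\overline M$ with $\overline P^\varepsilon_{ij}\not\equiv0$. Moreover there are $C,\varepsilon_0>0$ such that $\mathrm{Var}\big(\overline T^\varepsilon(\bar x,\overline S_j)\big)\le C(\overline\tau^\varepsilon_i)^2$ for every $\varepsilon\le\varepsilon_0$ (and $\bar x\in\overline S_i$), provided $\overline P^\varepsilon_{ij}\not\equiv0$.
   Context: $S$ is a metric space partitioned into disjoint Borel sets $S_1,\dots,S_M$; for $\varepsilon>0$, $Q^\varepsilon$ is a Markov kernel from $S$ to $S\times[0,\infty)$, $P^\varepsilon(x,B)=Q^\varepsilon(x,B\times[0,\infty))$, and for $P^\varepsilon(x,B)>0$, $T^\varepsilon(x,B)$ has law $\mathbb P(T^\varepsilon(x,B)\le t)=Q^\varepsilon(x,B\times[0,t])/P^\varepsilon(x,B)$. Assumptions: (i) $P^\varepsilon(x,S_i)=0$ for $x\in S_i$. (ii) For $i\ne j$, either $P^\varepsilon(x,S_j)=0$ for all $x\in S_i,\varepsilon$ (set $P^\varepsilon_{ij}\equiv0$) or it is positive for all $x\in S_i,\varepsilon$ and there are positive $P^\varepsilon_{ij}$ with $P^\varepsilon(x,S_j)/P^\varepsilon_{ij}\to1$ uniformly in $x\in S_i$;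 $\sum_{j\ne i}P^\varepsilon_{ij}=1$. (iii) communication: for $i\ne j$ a chain $i=i_1,\dots,i_k=j$ with $P^\varepsilon_{i_ri_{r+1}}>0$. (iv) For $P^\varepsilon_{ij}\not\equiv0$ there are $\tau^\varepsilon_{ij}$ with $\mathbb ET^\varepsilon(x,S_j)/\tau^\varepsilon_{ij}\to1$ uniformly in $x\in S_i$. (v) There are $C,\varepsilon_0$ with $\mathrm{Var}\,T^\varepsilon(x,S_j)\le C(\tau^\varepsilon_{ij})^2$ for $\varepsilon\le\varepsilon_0$, $x\in S_i$. Extended process: $\overline S=\{(x,j):x\in S_i,\ 1\le i,j\le M,\ P^\varepsilon_{ij}\not\equiv0\}$, with kernel $\overline Q^\varepsilon((x,j),(A\times\{k\})\times I)=\frac{1}{P^\varepsilon(x,S_j)}\int_{A\cap S_j}P^\varepsilon(y,S_k)\,Q^\varepsilon(x,dy\times I)$ for Borel $A\subseteq S$, $I\subseteq[0,\infty)$. $\overline S$ is partitioned into the sets $S_a\times\{b\}$ (with $P^\varepsilon_{ab}\not\equiv0$), re-indexed as $\overline S_1,\dots,\overline S_{\overline M}$. $\overline P^\varepsilon(\bar x,B)=\overline Q^\varepsilon(\bar x,B\times[0,\infty))$ and $\overline T^\varepsilon(\bar x,B)$ has law $\overline Q^\varepsilon(\bar x,B\times\cdot)/\overline P^\varepsilon(\bar x,B)$. If $\overline S_i=S_a\times\{b\}$ and $\overline S_j=S_c\times\{d\}$, set $\overline P^\varepsilon_{ij}=P^\varepsilon_{cd}$ if $b=c$ and $\overline P^\varepsilon_{ij}\equiv0$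 otherwise. *)

theory Defs
  imports "HOL-Probability.Probability"
begin

text \<open>A kernel value K is a measure on (state) x [0,oo) (time).
  Pk K B = P(x,B) = Q(x, B x [0,oo));  Tlaw K B = law of T(x,B);
  ET = its expectation, VarT = its variance (as an extended nonnegative real).\<close>

definition Pk :: "('b \<times> real) measure \<Rightarrow> 'b set \<Rightarrow> real" where
  "Pk K B = measure K (B \<times> {0..})"

definition Tlaw :: "('b \<times> real) measure \<Rightarrow> 'b set \<Rightarrow> real measure" where
  "Tlaw K B = distr (density K (\<lambda>z. indicator (B \<times> {0..}) z / ennreal (Pk K B))) borel snd"

definition ET :: "('b \<times> real) measure \<Rightarrow> 'b set \<Rightarrow> real" where
  "ET K B = (\<integral>t. t \<partial>(Tlaw K B))"

definition VarT :: "('b \<times> real) measure \<Rightarrow> 'b set \<Rightarrow> ennreal" where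
  "VarT K B = (\<integral>\<^sup>+t. ennreal ((t - ET K B)\<^sup>2) \<partial>(Tlaw K B))"

definition not_ident_zero :: "(real \<Rightarrow> real) \<Rightarrow> bool" where
  "not_ident_zero f \<longleftrightarrow> (\<exists>\<epsilon>>0. f \<epsilon> \<noteq> 0)"

text \<open>The extended kernel
  Qbar((x,j), (A x {k}) x I) = 1/P(x,S_j) * integral over A\<inter>S_j of P(y,S_k) Q(x, dy x I).\<close>
definition Qbar :: "(real \<Rightarrow> 'a::topological_space \<Rightarrow> ('a \<times> real) measure) \<Rightarrow> (nat \<Rightarrow> 'a set) \<Rightarrow> nat
    \<Rightarrow> real \<Rightarrow> 'a \<times> nat \<Rightarrow> (('a \<times> nat) \<times> real) measure" where
  "Qbar Q Sp M \<epsilon> xj = measure_of UNIV (sets ((borel \<Otimes>\<^sub>M count_space UNIV) \<Otimes>\<^sub>M borel))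
     (\<lambda>E. (\<integral>\<^sup>+z. indicator (Sp (snd xj) \<times> UNIV) z *
              (\<Sum>k<M. ennreal (Pk (Q \<epsilon> (fst z)) (Sp k)) * indicator E ((fst z, k), snd z))
            \<partial>(Q \<epsilon> (fst xj))) / ennreal (Pk (Q \<epsilon> (fst xj)) (Sp (snd xj))))"

text \<open>Pbar for the extended partition, indexed by pairs (a,b) standing for S_a x {b}.\<close>
definition Pbar :: "(real \<Rightarrow> nat \<Rightarrow> nat \<Rightarrow> real) \<Rightarrow> real \<Rightarrow> nat \<times> nat \<Rightarrow> nat \<times> nat \<Rightarrow> real" where
  "Pbar P \<epsilon> ab cd = (if snd ab = fst cd then P \<epsilon> (fst cd) (snd cd) else 0)"

end

theory Submission
  imports Defs
begin

text \<open>Started at x \<in> S_a with mark b, the extended process jumps when the original one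
  enters S_b, at a point y, and the new mark d is drawn with probability P(y,S_d). Hence the time
  to S_b \<times> {d} has the law of T(x,S_b) reweighted by the density y \<mapsto> P(y,S_d), which by (ii)
  stays uniformly within a factor 1 \<plusminus> \<eta> of the constant P_bd, with \<eta> \<rightarrow> 0. Such a reweighting
  changes the mean by a factor 1 + O(\<eta>) and increases the variance by at most a constant factor
  plus the square of the shift of the mean, so taubar_(a,b) = tau_ab works by (iv) and (v).\<close>

lemma one_plus_div_one_minus_le:
  fixes \<eta> :: real
  assumes "0 \<le> \<eta>" "\<eta> \<le> 1/2"
  shows "(1 + \<eta>) / (1 - \<eta>) \<le> 1 + 4 * \<eta>"
proof -
  have "4 * \<eta> * \<eta> \<le> 2 * \<eta>"
    using assms mult_left_mono[of \<eta> "1/2" "4 * \<eta>"] by simp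
  then have "1 + \<eta> \<le> (1 + 4 * \<eta>) * (1 - \<eta>)"
    by (simp add: algebra_simps)
  then show ?thesis
    using assms by (simp add: divide_le_eq)
qed

lemma one_minus_le_div_one_plus:
  fixes \<eta> :: real
  assumes "0 \<le> \<eta>" "\<eta> \<le> 1/2"
  shows "1 - 4 * \<eta> \<le> (1 - \<eta>) / (1 + \<eta>)"
proof -
  have "(1 - 4 * \<eta>) * (1 + \<eta>) \<le> 1 - \<eta>"
    using assms mult_nonneg_nonneg[of \<eta> \<eta>] by (simp add: algebra_simps)
  then show ?thesis
    using assms by (simp add: le_divide_eq)
qed

lemma abs_perturbed_quotient_sub_le:
  fixes u v u' v' w0 \<eta> :: real
  assumes v: "0 < v" and w0: "0 < w0" and \<eta>: "0 \<le> \<eta>" "\<eta> \<le> 1/2" and u: "0 \<le> u"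
    and u': "w0 * (1 - \<eta>) * u \<le> u'" "u' \<le> w0 * (1 + \<eta>) * u"
    and v': "w0 * (1 - \<eta>) * v \<le> v'" "v' \<le> w0 * (1 + \<eta>) * v"
  shows "\<bar>u' / v' - u / v\<bar> \<le> 4 * \<eta> * (u / v)"
proof -
  have lo_v: "0 < w0 * (1 - \<eta>) * v" using v w0 \<eta> by simp
  have "0 \<le> w0 * (1 - \<eta>) * u" using u w0 \<eta> by simp
  then have u'_nonneg: "0 \<le> u'" using u' by linarith
  have "u' / v' \<le> (w0 * (1 + \<eta>) * u) / (w0 * (1 - \<eta>) * v)"
    using u' v' lo_v u'_nonneg by (intro frac_le) simp_all
  also have "\<dots> = ((1 + \<eta>) / (1 - \<eta>)) * (u / v)"
    using w0 \<eta> v by (simp add: field_simps)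
  also have "\<dots> \<le> (1 + 4 * \<eta>) * (u / v)"
    by (rule mult_right_mono[OF one_plus_div_one_minus_le[OF \<eta>]]) (use u v in simp)
  finally have upper: "u' / v' \<le> (1 + 4 * \<eta>) * (u / v)" .
  have "(1 - 4 * \<eta>) * (u / v) \<le> ((1 - \<eta>) / (1 + \<eta>)) * (u / v)"
    by (rule mult_right_mono[OF one_minus_le_div_one_plus[OF \<eta>]]) (use u v in simp)
  also have "\<dots> = (w0 * (1 - \<eta>) * u) / (w0 * (1 + \<eta>) * v)"
    using w0 by (simp add: mult.assoc times_divide_times_eq)
  also have "\<dots> \<le> u' / v'"
    using u' v' lo_v u'_nonneg by (intro frac_le) simp_all
  finally show ?thesis
    using upper by (simp add: abs_le_iff algebra_simps)
qed

lemma perturbed_quotient_le_three: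
  fixes u u' v v' w0 \<eta> :: real
  assumes v: "0 < v" and w0: "0 < w0" and \<eta>: "0 \<le> \<eta>" "\<eta> \<le> 1/2" and u: "0 \<le> u"
    and u': "u' \<le> w0 * (1 + \<eta>) * u" and v': "w0 * (1 - \<eta>) * v \<le> v'"
  shows "u' / v' \<le> 3 * (u / v)"
proof (cases "0 \<le> u'")
  case True
  have "u' / v' \<le> (w0 * (1 + \<eta>) * u) / (w0 * (1 - \<eta>) * v)"
    using u' v' True v w0 \<eta> by (intro frac_le) simp_all
  also have "\<dots> = ((1 + \<eta>) / (1 - \<eta>)) * (u / v)"
    using w0 \<eta> v by (simp add: field_simps)
  also have "\<dots> \<le> 3 * (u / v)"
    using one_plus_div_one_minus_le[OF \<eta>] \<eta> u v by (intro mult_right_mono) simp_all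
  finally show ?thesis .
next
  case False
  have "0 < w0 * (1 - \<eta>) * v"
    using v w0 \<eta> by simp
  then have "u' / v' \<le> 0"
    using False v' by (simp add: divide_nonpos_pos)
  moreover have "0 \<le> u / v"
    using u v by simp
  ultimately show ?thesis
    by simp
qed

lemma abs_div_sub_one_lt:
  fixes u v t \<eta> \<delta> :: real
  assumes v: "\<bar>v - u\<bar> \<le> 4 * \<eta> * u" and u: "0 \<le> u" and t: "\<bar>u / t - 1\<bar> < \<delta>"
    and \<delta>: "\<delta> \<le> 1/2" and \<eta>: "0 \<le> \<eta>"
  shows "\<bar>v / t - 1\<bar> < 6 * \<eta> + \<delta>"
proof -
  have "\<bar>u / t\<bar> \<le> 3/2"
    using t \<delta> by linarith
  have "\<bar>v / t - u / t\<bar> = \<bar>v - u\<bar> / \<bar>t\<bar>"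
    by (simp add: diff_divide_distrib[symmetric] abs_divide)
  also have "\<dots> \<le> 4 * \<eta> * u / \<bar>t\<bar>"
    using v by (simp add: divide_right_mono)
  also have "\<dots> = 4 * \<eta> * \<bar>u / t\<bar>"
    using u by (simp add: abs_divide)
  also have "\<dots> \<le> 4 * \<eta> * (3/2)"
    using \<open>\<bar>u / t\<bar> \<le> 3/2\<close> \<eta> by (intro mult_left_mono) simp_all
  finally show ?thesis
    using t by linarith
qed

lemma ennreal_divide_divide_cancel:
  fixes X :: ennreal and c m :: real
  assumes "0 < c" "0 < m"
  shows "X / ennreal c / ennreal (m / c) = X / ennreal m"
  using assms by (cases X) (simp_all add: divide_ennreal ennreal_top_divide)

lemma ennreal_between_reals:
  fixes X :: ennreal
  assumes "ennreal a \<le> X" "X \<le> ennreal b" "0 \<le> b"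
  shows "X = ennreal (enn2real X)" "a \<le> enn2real X" "enn2real X \<le> b"
proof -
  have "X < top" using assms(2) ennreal_less_top[of b] by (rule le_less_trans)
  then show X: "X = ennreal (enn2real X)" by simp
  have "ennreal a \<le> ennreal (enn2real X)"
    using assms(1) X by simp
  then show "a \<le> enn2real X"
    by (simp add: ennreal_le_iff enn2real_nonneg)
  show "enn2real X \<le> b"
    by (rule enn2real_leI[OF assms(3,2)])
qed

section \<open>Time laws as integrals against the kernel\<close>

lemma sets_Tlaw [simp]: "sets (Tlaw K B) = sets borel"
  unfolding Tlaw_def by simp

lemma nn_integral_Tlaw:
  assumes snd: "snd \<in> K \<rightarrow>\<^sub>M borel" and B: "B \<times> {0..} \<in> sets K"
    and g: "g \<in> borel_measurable borel"
  shows "(\<integral>\<^sup>+t. g t \<partial>Tlaw K B) = (\<integral>\<^sup>+z. g (snd z) * indicator (B \<times> {0..}) z \<partial>K) / ennreal (Pk K B)"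
proof -
  have dens: "(\<lambda>z. indicator (B \<times> {0..}) z / ennreal (Pk K B)) \<in> borel_measurable K"
    using B by measurable
  have snd': "snd \<in> density K (\<lambda>z. indicator (B \<times> {0..}) z / ennreal (Pk K B)) \<rightarrow>\<^sub>M borel"
    using snd by (subst measurable_cong_sets[OF sets_density refl])
  have "(\<integral>\<^sup>+t. g t \<partial>Tlaw K B)
      = (\<integral>\<^sup>+z. g (snd z) \<partial>density K (\<lambda>z. indicator (B \<times> {0..}) z / ennreal (Pk K B)))"
    unfolding Tlaw_def by (rule nn_integral_distr[OF snd']) (use g in simp)
  also have "\<dots> = (\<integral>\<^sup>+z. (g (snd z) * indicator (B \<times> {0..}) z) / ennreal (Pk K B) \<partial>K)"
    by (subst nn_integral_density[OF dens])
      (simp_all add: ennreal_times_divide mult.commute measurable_compose[OF snd g])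
  also have "\<dots> = (\<integral>\<^sup>+z. g (snd z) * indicator (B \<times> {0..}) z \<partial>K) / ennreal (Pk K B)"
    by (rule nn_integral_divide)
      (intro borel_measurable_times_ennreal measurable_compose[OF snd g] borel_measurable_indicator B)
  finally show ?thesis .
qed

lemma ET_eq_nn_integral:
  assumes snd: "snd \<in> K \<rightarrow>\<^sub>M borel" and B: "B \<times> {0..} \<in> sets K"
  shows "ET K B = enn2real ((\<integral>\<^sup>+z. ennreal (snd z) * indicator (B \<times> {0..}) z \<partial>K) / ennreal (Pk K B))"
proof -
  have "(\<lambda>z. indicator {..<0::real} (snd z) * indicator (B \<times> {0..}) z) = (\<lambda>z. 0::ennreal)"
    by (auto simp: indicator_def fun_eq_iff)
  then have "(\<integral>\<^sup>+t. indicator {..<0} t \<partial>Tlaw K B) = 0"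
    by (subst nn_integral_Tlaw[OF snd B]) simp_all
  then have "emeasure (Tlaw K B) {..<0} = 0"
    by simp
  then have "AE t in Tlaw K B. 0 \<le> t"
    by (intro AE_I'[of "{..<0}"]) auto
  then have "ET K B = enn2real (\<integral>\<^sup>+t. ennreal t \<partial>Tlaw K B)"
    unfolding ET_def
    by (intro integral_eq_nn_integral) (auto simp: measurable_cong_sets[OF sets_Tlaw refl])
  also have "(\<integral>\<^sup>+t. ennreal t \<partial>Tlaw K B)
      = (\<integral>\<^sup>+z. ennreal (snd z) * indicator (B \<times> {0..}) z \<partial>K) / ennreal (Pk K B)"
    by (rule nn_integral_Tlaw[OF snd B]) simp
  finally show ?thesis .
qed

lemma ET_nonneg:
  assumes "snd \<in> K \<rightarrow>\<^sub>M borel" and "B \<times> {0..} \<in> sets K"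
  shows "0 \<le> ET K B"
  unfolding ET_eq_nn_integral[OF assms] by (simp add: enn2real_nonneg)

lemma VarT_eq_nn_integral:
  assumes "snd \<in> K \<rightarrow>\<^sub>M borel" and "B \<times> {0..} \<in> sets K"
  shows "VarT K B
    = (\<integral>\<^sup>+z. ennreal ((snd z - ET K B)\<^sup>2) * indicator (B \<times> {0..}) z \<partial>K) / ennreal (Pk K B)"
  unfolding VarT_def by (rule nn_integral_Tlaw[OF assms]) simp

section \<open>Reweighted time laws\<close>

text \<open>Assumption time_law says that the time to B' under L is distributed as the time to B
  under K reweighted by the density w.\<close>

locale reweighted_time_law =
  fixes K :: "('b \<times> real) measure" and B :: "'b set"
    and L :: "('c \<times> real) measure" and B' :: "'c set"
    and w :: "'b \<Rightarrow> real" and c w0 \<eta> :: real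
  assumes snd_K: "snd \<in> K \<rightarrow>\<^sub>M borel" and B_K: "B \<times> {0..} \<in> sets K"
    and finite_K: "finite_measure K"
    and snd_L: "snd \<in> L \<rightarrow>\<^sub>M borel" and B'_L: "B' \<times> {0..} \<in> sets L"
    and time_law: "\<And>g. g \<in> borel_measurable borel \<Longrightarrow>
      (\<integral>\<^sup>+z. g (snd z) * indicator (B' \<times> {0..}) z \<partial>L)
      = (\<integral>\<^sup>+z. ennreal (w (fst z)) * g (snd z) * indicator (B \<times> {0..}) z \<partial>K) / ennreal c"
    and c_pos: "0 < c" and Pk_K_pos: "0 < Pk K B"
    and w0_pos: "0 < w0" and \<eta>_nonneg: "0 \<le> \<eta>" and \<eta>_le: "\<eta> \<le> 1/2"
    and w_close: "\<And>y. y \<in> B \<Longrightarrow> \<bar>w y / w0 - 1\<bar> \<le> \<eta>"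
begin

definition moment :: "(real \<Rightarrow> ennreal) \<Rightarrow> ennreal" where
  "moment g = (\<integral>\<^sup>+z. g (snd z) * indicator (B \<times> {0..}) z \<partial>K)"

definition weighted_moment :: "(real \<Rightarrow> ennreal) \<Rightarrow> ennreal" where
  "weighted_moment g = (\<integral>\<^sup>+z. ennreal (w (fst z)) * g (snd z) * indicator (B \<times> {0..}) z \<partial>K)"

lemma w_between:
  assumes "y \<in> B"
  shows "w0 * (1 - \<eta>) \<le> w y \<and> w y \<le> w0 * (1 + \<eta>)"
proof -
  have "1 - \<eta> \<le> w y / w0" "w y / w0 \<le> 1 + \<eta>"
    using w_close[OF assms] by (auto simp: abs_le_iff)
  then show ?thesis
    using w0_pos by (simp add: pos_le_divide_eq pos_divide_le_eq mult.commute)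
qed

lemma weighted_moment_bounds:
  assumes g: "g \<in> borel_measurable borel"
  shows "ennreal (w0 * (1 - \<eta>)) * moment g \<le> weighted_moment g"
    and "weighted_moment g \<le> ennreal (w0 * (1 + \<eta>)) * moment g"
proof -
  have g_K: "(\<lambda>z. g (snd z) * indicator (B \<times> {0..}) z) \<in> borel_measurable K"
    using measurable_compose[OF snd_K g] B_K by measurable
  show "ennreal (w0 * (1 - \<eta>)) * moment g \<le> weighted_moment g"
    unfolding moment_def weighted_moment_def nn_integral_cmult[OF g_K, symmetric]
  proof (rule nn_integral_mono)
    fix z :: "'b \<times> real"
    show "ennreal (w0 * (1 - \<eta>)) * (g (snd z) * indicator (B \<times> {0..}) z)
      \<le> ennreal (w (fst z)) * g (snd z) * indicator (B \<times> {0..}) z"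
      using w_between[of "fst z"]
      by (cases "z \<in> B \<times> {0..}") (auto simp: mult.assoc intro!: mult_right_mono ennreal_leI)
  qed
  show "weighted_moment g \<le> ennreal (w0 * (1 + \<eta>)) * moment g"
    unfolding moment_def weighted_moment_def nn_integral_cmult[OF g_K, symmetric]
  proof (rule nn_integral_mono)
    fix z :: "'b \<times> real"
    show "ennreal (w (fst z)) * g (snd z) * indicator (B \<times> {0..}) z
      \<le> ennreal (w0 * (1 + \<eta>)) * (g (snd z) * indicator (B \<times> {0..}) z)"
      using w_between[of "fst z"]
      by (cases "z \<in> B \<times> {0..}") (auto simp: mult.assoc intro!: mult_right_mono ennreal_leI)
  qed
qed

lemma weighted_moment_real:
  assumes g: "g \<in> borel_measurable borel" and m: "moment g = ennreal m" "0 \<le> m"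
  shows "weighted_moment g = ennreal (enn2real (weighted_moment g))"
    and "w0 * (1 - \<eta>) * m \<le> enn2real (weighted_moment g)"
    and "enn2real (weighted_moment g) \<le> w0 * (1 + \<eta>) * m"
proof -
  have "ennreal (w0 * (1 - \<eta>) * m) \<le> weighted_moment g"
    "weighted_moment g \<le> ennreal (w0 * (1 + \<eta>) * m)"
    using weighted_moment_bounds[OF g] m w0_pos \<eta>_nonneg \<eta>_le by (simp_all add: ennreal_mult)
  from ennreal_between_reals[OF this]
  show "weighted_moment g = ennreal (enn2real (weighted_moment g))"
    "w0 * (1 - \<eta>) * m \<le> enn2real (weighted_moment g)"
    "enn2real (weighted_moment g) \<le> w0 * (1 + \<eta>) * m"
    using m w0_pos \<eta>_nonneg by simp_all
qed

lemma moment_one: "moment (\<lambda>_. 1) = ennreal (Pk K B)"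
  using finite_measure.emeasure_eq_measure[OF finite_K] B_K
  by (simp add: moment_def Pk_def)

definition mass :: real where
  "mass = enn2real (weighted_moment (\<lambda>_. 1))"

lemma weighted_moment_one: "weighted_moment (\<lambda>_. 1) = ennreal mass"
  and mass_between: "w0 * (1 - \<eta>) * Pk K B \<le> mass" "mass \<le> w0 * (1 + \<eta>) * Pk K B"
  using weighted_moment_real[of "\<lambda>_. 1" "Pk K B"] moment_one Pk_K_pos
  by (simp_all add: mass_def)

lemma mass_pos: "0 < mass"
proof -
  have "0 < w0 * (1 - \<eta>) * Pk K B"
    using w0_pos \<eta>_le Pk_K_pos by simp
  then show ?thesis
    using mass_between(1) by linarith
qed

lemma Pk_L_eq_mass: "Pk L B' = mass / c"
proof -
  have "emeasure L (B' \<times> {0..}) = (\<integral>\<^sup>+z. 1 * indicator (B' \<times> {0..}) z \<partial>L)"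
    using B'_L by simp
  also have "\<dots> = ennreal mass / ennreal c"
    using time_law[of "\<lambda>_. 1"] weighted_moment_one by (simp add: weighted_moment_def)
  also have "\<dots> = ennreal (mass / c)"
    using mass_pos c_pos by (simp add: divide_ennreal)
  finally show ?thesis
    using mass_pos c_pos by (simp add: Pk_def measure_def)
qed

lemma ET_K_eq_moment: "ET K B = enn2real (moment ennreal / ennreal (Pk K B))"
  unfolding ET_eq_nn_integral[OF snd_K B_K] moment_def ..

lemma VarT_K_eq_moment: "VarT K B = moment (\<lambda>t. ennreal ((t - ET K B)\<^sup>2)) / ennreal (Pk K B)"
  unfolding VarT_eq_nn_integral[OF snd_K B_K] moment_def ..

lemma ET_L_eq_weighted_moment: "ET L B' = enn2real (weighted_moment ennreal / ennreal mass)"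
proof -
  have "ET L B' = enn2real (weighted_moment ennreal / ennreal c / ennreal (mass / c))"
    unfolding ET_eq_nn_integral[OF snd_L B'_L] Pk_L_eq_mass weighted_moment_def
    by (subst time_law) simp_all
  then show ?thesis
    unfolding ennreal_divide_divide_cancel[OF c_pos mass_pos] .
qed

lemma VarT_L_eq_weighted_moment: "VarT L B' = weighted_moment (\<lambda>t. ennreal ((t - ET L B')\<^sup>2)) / ennreal mass"
proof -
  have "VarT L B'
      = weighted_moment (\<lambda>t. ennreal ((t - ET L B')\<^sup>2)) / ennreal c / ennreal (mass / c)"
    unfolding VarT_eq_nn_integral[OF snd_L B'_L] Pk_L_eq_mass weighted_moment_def
    by (subst time_law) simp_all
  then show ?thesis
    unfolding ennreal_divide_divide_cancel[OF c_pos mass_pos] .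
qed


lemma ET_K_nonneg: "0 \<le> ET K B"
  by (rule ET_nonneg[OF snd_K B_K])

text \<open>Since enn2real \<top> = 0, a nonzero mean rules out an infinite first moment.\<close>

lemma ET_L_close:
  assumes ET_K_nonzero: "ET K B \<noteq> 0"
  shows "\<bar>ET L B' - ET K B\<bar> \<le> 4 * \<eta> * ET K B"
proof -
  have "moment ennreal \<noteq> \<top>"
    using ET_K_eq_moment ET_K_nonzero Pk_K_pos by (auto simp: ennreal_top_divide)
  then obtain m where m: "moment ennreal = ennreal m" "0 \<le> m"
    by (cases "moment ennreal") auto
  have ET_K_val: "ET K B = m / Pk K B"
    using ET_K_eq_moment m Pk_K_pos by (simp add: divide_ennreal)
  define J where "J = enn2real (weighted_moment ennreal)"
  note first = weighted_moment_real[of ennreal m, OF _ m, folded J_def]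
  have "0 \<le> J"
    by (simp add: J_def enn2real_nonneg)
  then have ET_L_val: "ET L B' = J / mass"
    using first(1) mass_pos by (simp add: ET_L_eq_weighted_moment divide_ennreal)
  show ?thesis
    unfolding ET_K_val ET_L_val
    using abs_perturbed_quotient_sub_le[OF Pk_K_pos w0_pos \<eta>_nonneg \<eta>_le m(2)] first(2,3) mass_between
    by simp
qed

lemma moment_shift_le:
  "moment (\<lambda>t. ennreal ((t - s)\<^sup>2))
    \<le> 2 * moment (\<lambda>t. ennreal ((t - r)\<^sup>2)) + ennreal (2 * (r - s)\<^sup>2 * Pk K B)"
proof -
  have [measurable]: "snd \<in> K \<rightarrow>\<^sub>M borel" "B \<times> {0..} \<in> sets K"
    using snd_K B_K .
  have "moment (\<lambda>t. ennreal ((t - s)\<^sup>2)) \<le> (\<integral>\<^sup>+z. 2 * (ennreal ((snd z - r)\<^sup>2)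
      * indicator (B \<times> {0..}) z) + ennreal (2 * (r - s)\<^sup>2) * indicator (B \<times> {0..}) z \<partial>K)"
    unfolding moment_def
  proof (rule nn_integral_mono)
    fix z :: "'b \<times> real"
    have "2 * (snd z - r)\<^sup>2 + 2 * (r - s)\<^sup>2 - (snd z - s)\<^sup>2 = ((snd z - r) - (r - s))\<^sup>2"
      by (simp add: power2_eq_square algebra_simps)
    then have "(snd z - s)\<^sup>2 \<le> 2 * (snd z - r)\<^sup>2 + 2 * (r - s)\<^sup>2"
      by (metis diff_ge_0_iff_ge zero_le_power2)
    then have "ennreal ((snd z - s)\<^sup>2) \<le> ennreal (2 * (snd z - r)\<^sup>2) + ennreal (2 * (r - s)\<^sup>2)"
      by (simp add: ennreal_plus[symmetric] del: ennreal_plus)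
    also have "ennreal (2 * (snd z - r)\<^sup>2) = 2 * ennreal ((snd z - r)\<^sup>2)"
      using ennreal_mult[of 2 "(snd z - r)\<^sup>2"] by simp
    finally have "ennreal ((snd z - s)\<^sup>2) \<le> 2 * ennreal ((snd z - r)\<^sup>2) + ennreal (2 * (r - s)\<^sup>2)" .
    then show "ennreal ((snd z - s)\<^sup>2) * indicator (B \<times> {0..}) z
      \<le> 2 * (ennreal ((snd z - r)\<^sup>2) * indicator (B \<times> {0..}) z)
        + ennreal (2 * (r - s)\<^sup>2) * indicator (B \<times> {0..}) z"
      by (cases "z \<in> B \<times> {0..}") simp_all
  qed
  also have "\<dots> = 2 * moment (\<lambda>t. ennreal ((t - r)\<^sup>2)) + ennreal (2 * (r - s)\<^sup>2) * ennreal (Pk K B)"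
  proof -
    have "(\<lambda>z. ennreal ((snd z - r)\<^sup>2) * indicator (B \<times> {0..}) z) \<in> borel_measurable K"
      "(\<lambda>z. indicator (B \<times> {0..}) z :: ennreal) \<in> borel_measurable K"
      by measurable
    then show ?thesis
      using moment_one by (simp add: nn_integral_add nn_integral_cmult moment_def)
  qed
  also have "\<dots> = 2 * moment (\<lambda>t. ennreal ((t - r)\<^sup>2)) + ennreal (2 * (r - s)\<^sup>2 * Pk K B)"
    using Pk_K_pos by (simp add: ennreal_mult)
  finally show ?thesis .
qed

lemma VarT_L_le: "VarT L B' \<le> ennreal 6 * VarT K B + ennreal (6 * (ET K B - ET L B')\<^sup>2)"
proof (cases "moment (\<lambda>t. ennreal ((t - ET K B)\<^sup>2)) = \<top>")
  case True
  then have "VarT K B = \<top>"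
    using VarT_K_eq_moment Pk_K_pos by (simp add: ennreal_top_divide)
  then show ?thesis
    by (simp add: ennreal_mult_top)
next
  case False
  define m mb where "m = ET K B" and "mb = ET L B'"
  obtain U where U: "moment (\<lambda>t. ennreal ((t - m)\<^sup>2)) = ennreal U" "0 \<le> U"
    using False unfolding m_def by (cases "moment (\<lambda>t. ennreal ((t - ET K B)\<^sup>2))") auto
  define D where "D = 2 * U + 2 * (m - mb)\<^sup>2 * Pk K B"
  have D_nonneg: "0 \<le> D"
    using U Pk_K_pos by (simp add: D_def)
  have "moment (\<lambda>t. ennreal ((t - mb)\<^sup>2)) \<le> ennreal D"
    using moment_shift_le[of mb m] U Pk_K_pos
    by (simp add: D_def ennreal_plus ennreal_mult)
  then have "ennreal (w0 * (1 + \<eta>)) * moment (\<lambda>t. ennreal ((t - mb)\<^sup>2))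
      \<le> ennreal (w0 * (1 + \<eta>)) * ennreal D"
    by (rule mult_left_mono) simp
  also have "\<dots> = ennreal (w0 * (1 + \<eta>) * D)"
    using w0_pos \<eta>_nonneg by (simp add: ennreal_mult')
  finally have "weighted_moment (\<lambda>t. ennreal ((t - mb)\<^sup>2)) \<le> ennreal (w0 * (1 + \<eta>) * D)"
    using weighted_moment_bounds(2)[of "\<lambda>t. ennreal ((t - mb)\<^sup>2)"] by simp
  from ennreal_between_reals[of 0, OF _ this]
  obtain W where W: "weighted_moment (\<lambda>t. ennreal ((t - mb)\<^sup>2)) = ennreal W"
    "0 \<le> W" "W \<le> w0 * (1 + \<eta>) * D"
    using w0_pos \<eta>_nonneg D_nonneg by fastforce
  have VarT_L_val: "VarT L B' = ennreal (W / mass)"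
    using VarT_L_eq_weighted_moment W(1,2) mass_pos by (simp add: mb_def divide_ennreal)
  have VarT_K_val: "VarT K B = ennreal (U / Pk K B)"
    using VarT_K_eq_moment U Pk_K_pos by (simp add: m_def divide_ennreal)
  have "W / mass \<le> 3 * (D / Pk K B)"
    using W(3) mass_between(1) perturbed_quotient_le_three[OF Pk_K_pos w0_pos \<eta>_nonneg \<eta>_le D_nonneg] by blast
  also have "\<dots> = 6 * (U / Pk K B) + 6 * (m - mb)\<^sup>2"
    using Pk_K_pos by (simp add: D_def field_simps)
  finally have "ennreal (W / mass) \<le> ennreal (6 * (U / Pk K B)) + ennreal (6 * (m - mb)\<^sup>2)"
    using U Pk_K_pos by (simp add: ennreal_plus[symmetric] del: ennreal_plus)
  also have "ennreal (6 * (U / Pk K B)) = ennreal 6 * ennreal (U / Pk K B)"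
    by (rule ennreal_mult') simp
  finally show ?thesis
    unfolding VarT_L_val VarT_K_val m_def mb_def .
qed

lemma VarT_L_le_scale:
  assumes ratio: "\<bar>ET K B / t - 1\<bar> < 1/2"
  shows "VarT L B' \<le> ennreal 6 * VarT K B + ennreal (54 * t\<^sup>2)"
proof -
  have "ET K B \<noteq> 0" "t \<noteq> 0"
    using ratio by auto
  have "ET K B / \<bar>t\<bar> = \<bar>ET K B / t\<bar>"
    using ET_K_nonneg by (simp add: abs_divide)
  also have "\<dots> < 3/2"
    using ratio by linarith
  finally have "ET K B \<le> 3/2 * \<bar>t\<bar>"
    using \<open>t \<noteq> 0\<close> by (simp add: divide_less_eq)
  moreover have "4 * \<eta> * ET K B \<le> 2 * ET K B"
    using \<eta>_le ET_K_nonneg by (intro mult_right_mono) simp_all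
  ultimately have "\<bar>ET K B - ET L B'\<bar> \<le> 3 * \<bar>t\<bar>"
    using ET_L_close[OF \<open>ET K B \<noteq> 0\<close>] by linarith
  then have "(ET K B - ET L B')\<^sup>2 \<le> 9 * t\<^sup>2"
    using power_mono[of "\<bar>ET K B - ET L B'\<bar>" "3 * \<bar>t\<bar>" 2] by (simp add: power_mult_distrib)
  then have "ennreal (6 * (ET K B - ET L B')\<^sup>2) \<le> ennreal (54 * t\<^sup>2)"
    by (intro ennreal_leI) simp
  then show ?thesis
    using VarT_L_le by (meson add_left_mono order_trans)
qed

end

section \<open>The extended kernel\<close>

lemma sets_Qbar [simp]: "sets (Qbar Q Sp M \<epsilon> xb) = sets ((borel \<Otimes>\<^sub>M count_space UNIV) \<Otimes>\<^sub>M borel)"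
proof -
  define \<Omega> :: "(('a \<times> nat) \<times> real) measure" where
    "\<Omega> = (borel \<Otimes>\<^sub>M count_space UNIV) \<Otimes>\<^sub>M borel"
  have "space \<Omega> = UNIV"
    by (simp add: space_pair_measure \<Omega>_def)
  then have "sigma_sets UNIV (sets \<Omega>) = sets \<Omega>"
    using sets.sigma_sets_eq[of \<Omega>] by simp
  then show ?thesis
    unfolding Qbar_def \<Omega>_def[symmetric] by simp
qed

lemma Pk_borel_measurable:
  assumes "K \<in> borel \<rightarrow>\<^sub>M subprob_algebra (borel \<Otimes>\<^sub>M borel)" and "S \<in> sets borel"
  shows "(\<lambda>y. Pk (K y) S) \<in> borel_measurable borel"
proof -
  have "S \<times> {0::real..} \<in> sets (borel \<Otimes>\<^sub>M borel)"
    using assms(2) by (intro pair_measureI) simp_all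
  then show ?thesis
    unfolding Pk_def by (rule measurable_compose[OF assms(1) measurable_measure_subprob_algebra])
qed

lemma nn_integral_distr_density_count_space:
  assumes I: "finite I" and h: "h \<in> borel_measurable (K \<Otimes>\<^sub>M count_space I)"
    and \<phi>: "\<phi> \<in> K \<Otimes>\<^sub>M count_space I \<rightarrow>\<^sub>M N" and G: "G \<in> borel_measurable N"
  shows "integral\<^sup>N (distr (density (K \<Otimes>\<^sub>M count_space I) h) N \<phi>) G
    = (\<integral>\<^sup>+z. (\<Sum>k\<in>I. h (z, k) * G (\<phi> (z, k))) \<partial>K)"
proof -
  interpret marks: finite_measure "count_space I"
    using I by (rule finite_measure_count_space)
  have "integral\<^sup>N (distr (density (K \<Otimes>\<^sub>M count_space I) h) N \<phi>) G
      = (\<integral>\<^sup>+w. G (\<phi> w) \<partial>density (K \<Otimes>\<^sub>M count_space I) h)"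
    by (rule nn_integral_distr) (use \<phi> G in \<open>simp_all add: measurable_cong_sets[OF sets_density refl]\<close>)
  also have "\<dots> = (\<integral>\<^sup>+w. h w * G (\<phi> w) \<partial>(K \<Otimes>\<^sub>M count_space I))"
    by (rule nn_integral_density[OF h]) (use measurable_comp[OF \<phi> G] in \<open>simp add: comp_def\<close>)
  also have "\<dots> = (\<integral>\<^sup>+z. \<integral>\<^sup>+k. h (z, k) * G (\<phi> (z, k)) \<partial>count_space I \<partial>K)"
    using marks.nn_integral_fst[of "\<lambda>w. h w * G (\<phi> w)"] h measurable_comp[OF \<phi> G]
    by (simp add: comp_def)
  also have "\<dots> = (\<integral>\<^sup>+z. (\<Sum>k\<in>I. h (z, k) * G (\<phi> (z, k))) \<partial>K)"
    using I by (simp add: nn_integral_count_space_finite)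
  finally show ?thesis .
qed

text \<open>Qbar((x,b), -) as a push-forward: draw (y,t) from Q(x, -) restricted to y \<in> S_b, then
  the mark k with weight pk k y = P(y,S_k), normalised by c = P(x,S_b).\<close>

definition marked_law :: "('a::topological_space \<times> real) measure \<Rightarrow> (nat \<Rightarrow> 'a \<Rightarrow> real) \<Rightarrow> nat
    \<Rightarrow> 'a set \<Rightarrow> real \<Rightarrow> (('a \<times> nat) \<times> real) measure" where
  "marked_law Qx pk M Sb c =
     distr (density (Qx \<Otimes>\<^sub>M count_space {..<M})
         (\<lambda>w. indicator (Sb \<times> UNIV) (fst w) * ennreal (pk (snd w) (fst (fst w))) / ennreal c))
       ((borel \<Otimes>\<^sub>M count_space UNIV) \<Otimes>\<^sub>M borel) (\<lambda>w. ((fst (fst w), snd w), snd (fst w)))"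

lemma sets_marked_law [simp]:
  "sets (marked_law Qx pk M Sb c) = sets ((borel \<Otimes>\<^sub>M count_space UNIV) \<Otimes>\<^sub>M borel)"
  by (simp add: marked_law_def)

lemma nn_integral_marked_law:
  fixes Qx :: "('a::topological_space \<times> real) measure" and pk :: "nat \<Rightarrow> 'a \<Rightarrow> real"
  assumes sQ: "sets Qx = sets (borel \<Otimes>\<^sub>M borel)"
    and pk: "\<And>k. k < M \<Longrightarrow> pk k \<in> borel_measurable borel" and Sb: "Sb \<in> sets borel"
    and G: "G \<in> borel_measurable ((borel \<Otimes>\<^sub>M count_space UNIV) \<Otimes>\<^sub>M borel)"
  shows "integral\<^sup>N (marked_law Qx pk M Sb c) G
    = (\<integral>\<^sup>+z. indicator (Sb \<times> UNIV) z * (\<Sum>k<M. ennreal (pk k (fst z)) * G ((fst z, k), snd z)) \<partial>Qx)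
      / ennreal c"
proof -
  have sets_prod: "measurable (Qx \<Otimes>\<^sub>M count_space {..<M})
      = measurable ((borel \<Otimes>\<^sub>M borel) \<Otimes>\<^sub>M count_space {..<M})"
    by (intro ext measurable_cong_sets sets_pair_measure_cong sQ refl)
  have pk_mark: "(\<lambda>w::('a \<times> real) \<times> nat. ennreal (pk (snd w) (fst (fst w))))
      \<in> borel_measurable ((borel \<Otimes>\<^sub>M borel) \<Otimes>\<^sub>M count_space {..<M})"
  proof (rule measurable_compose_countable'[where I="{..<M}" and f="\<lambda>k w. ennreal (pk k (fst (fst w)))",
        OF _ measurable_snd])
    fix k assume "k \<in> {..<M}"
    then have [measurable]: "pk k \<in> borel_measurable borel" using pk by simp
    show "(\<lambda>w::('a \<times> real) \<times> nat. ennreal (pk k (fst (fst w))))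
      \<in> borel_measurable ((borel \<Otimes>\<^sub>M borel) \<Otimes>\<^sub>M count_space {..<M})"
      by measurable
  qed simp
  note [measurable] = Sb
  have h: "(\<lambda>w. indicator (Sb \<times> UNIV) (fst w) * ennreal (pk (snd w) (fst (fst w))) / ennreal c)
      \<in> borel_measurable (Qx \<Otimes>\<^sub>M count_space {..<M})"
    unfolding sets_prod
    by (intro borel_measurable_divide_ennreal borel_measurable_times_ennreal pk_mark measurable_const)
      measurable
  have mark: "snd \<in> (borel \<Otimes>\<^sub>M borel) \<Otimes>\<^sub>M count_space {..<M} \<rightarrow>\<^sub>M count_space UNIV"
    by (rule measurable_compose[OF measurable_snd measurable_count_space])
  have \<phi>: "(\<lambda>w. ((fst (fst w), snd w), snd (fst w)))
      \<in> Qx \<Otimes>\<^sub>M count_space {..<M} \<rightarrow>\<^sub>M (borel \<Otimes>\<^sub>M count_space UNIV) \<Otimes>\<^sub>M borel"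
    unfolding sets_prod
    by (intro measurable_Pair mark measurable_compose[OF measurable_fst measurable_fst]
        measurable_compose[OF measurable_fst measurable_snd])
  have G_mark: "(\<lambda>z. ennreal (pk k (fst z)) * G ((fst z, k), snd z)) \<in> borel_measurable Qx"
    if "k < M" for k
    using pk[OF that] G unfolding measurable_cong_sets[OF sQ refl] by measurable
  have "integral\<^sup>N (marked_law Qx pk M Sb c) G = (\<integral>\<^sup>+z. indicator (Sb \<times> UNIV) z
      * (\<Sum>k<M. ennreal (pk k (fst z)) * G ((fst z, k), snd z)) / ennreal c \<partial>Qx)"
    unfolding marked_law_def nn_integral_distr_density_count_space[OF finite_lessThan h \<phi> G]
    by (simp add: divide_ennreal_def sum_distrib_left sum_distrib_right mult_ac)
  also have "\<dots> = (\<integral>\<^sup>+z. indicator (Sb \<times> UNIV) z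
      * (\<Sum>k<M. ennreal (pk k (fst z)) * G ((fst z, k), snd z)) \<partial>Qx) / ennreal c"
    by (rule nn_integral_divide) (use G_mark Sb sQ in \<open>simp add: measurable_cong_sets[OF sQ refl]\<close>)
  finally show ?thesis .
qed

lemma Qbar_eq_marked_law:
  fixes Q :: "real \<Rightarrow> 'a::topological_space \<Rightarrow> ('a \<times> real) measure"
  assumes Qk: "Q \<epsilon> \<in> borel \<rightarrow>\<^sub>M subprob_algebra (borel \<Otimes>\<^sub>M borel)"
    and Sp: "\<forall>i<M. Sp i \<in> sets borel" and b: "b < M"
  shows "Qbar Q Sp M \<epsilon> (x, b)
    = marked_law (Q \<epsilon> x) (\<lambda>k y. Pk (Q \<epsilon> y) (Sp k)) M (Sp b) (Pk (Q \<epsilon> x) (Sp b))"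
    (is "_ = ?N")
proof -
  define \<Omega> :: "(('a \<times> nat) \<times> real) measure" where "\<Omega> = (borel \<Otimes>\<^sub>M count_space UNIV) \<Otimes>\<^sub>M borel"
  have sQ: "sets (Q \<epsilon> x) = sets (borel \<Otimes>\<^sub>M borel)"
    by (rule sets_kernel[OF Qk]) simp
  have pk: "\<And>k. k < M \<Longrightarrow> (\<lambda>y. Pk (Q \<epsilon> y) (Sp k)) \<in> borel_measurable borel"
    using Sp by (intro Pk_borel_measurable[OF Qk]) simp
  have Sb: "Sp b \<in> sets borel" using Sp b by simp
  have space_\<Omega>: "space \<Omega> = UNIV"
    unfolding \<Omega>_def by (simp add: space_pair_measure)
  have "Qbar Q Sp M \<epsilon> (x, b) = measure_of UNIV (sets \<Omega>) (emeasure ?N)"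
    unfolding Qbar_def \<Omega>_def[symmetric] fst_conv snd_conv
  proof (rule measure_of_eq)
    fix E assume "E \<in> sigma_sets UNIV (sets \<Omega>)"
    then have E: "E \<in> sets \<Omega>"
      using sets.sigma_sets_eq[of \<Omega>] space_\<Omega> by simp
    have "emeasure ?N E = integral\<^sup>N ?N (indicator E)"
      using E by (simp add: \<Omega>_def)
    also have "\<dots> = (\<integral>\<^sup>+z. indicator (Sp b \<times> UNIV) z * (\<Sum>k<M. ennreal (Pk (Q \<epsilon> (fst z)) (Sp k))
        * indicator E ((fst z, k), snd z)) \<partial>Q \<epsilon> x) / ennreal (Pk (Q \<epsilon> x) (Sp b))"
      by (rule nn_integral_marked_law[OF sQ pk Sb]) (use E in \<open>simp_all add: \<Omega>_def\<close>)
    finally show "(\<integral>\<^sup>+z. indicator (Sp b \<times> UNIV) z * (\<Sum>k<M. ennreal (Pk (Q \<epsilon> (fst z)) (Sp k))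
        * indicator E ((fst z, k), snd z)) \<partial>Q \<epsilon> x) / ennreal (Pk (Q \<epsilon> x) (Sp b)) = emeasure ?N E"
      by simp
  qed simp
  also have "\<dots> = ?N"
    using measure_of_of_measure[of ?N] by (simp add: marked_law_def \<Omega>_def space_pair_measure)
  finally show ?thesis .
qed

lemma nn_integral_Qbar_time:
  fixes Q :: "real \<Rightarrow> 'a::topological_space \<Rightarrow> ('a \<times> real) measure"
  assumes Qk: "Q \<epsilon> \<in> borel \<rightarrow>\<^sub>M subprob_algebra (borel \<Otimes>\<^sub>M borel)"
    and Sp: "\<forall>i<M. Sp i \<in> sets borel" and b: "b < M" and d: "d < M"
    and g: "g \<in> borel_measurable borel"
  shows "(\<integral>\<^sup>+w. g (snd w) * indicator ((Sp b \<times> {d}) \<times> {0..}) w \<partial>Qbar Q Sp M \<epsilon> (x, b))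
    = (\<integral>\<^sup>+z. ennreal (Pk (Q \<epsilon> (fst z)) (Sp d)) * g (snd z) * indicator (Sp b \<times> {0..}) z \<partial>Q \<epsilon> x)
      / ennreal (Pk (Q \<epsilon> x) (Sp b))"
proof -
  have sQ: "sets (Q \<epsilon> x) = sets (borel \<Otimes>\<^sub>M borel)"
    by (rule sets_kernel[OF Qk]) simp
  have pk: "\<And>k. k < M \<Longrightarrow> (\<lambda>y. Pk (Q \<epsilon> y) (Sp k)) \<in> borel_measurable borel"
    using Sp by (intro Pk_borel_measurable[OF Qk]) simp
  have Sb: "Sp b \<in> sets borel" using Sp b by simp
  note [measurable] = Sb g
  have F: "(\<lambda>w. g (snd w) * indicator ((Sp b \<times> {d}) \<times> {0..}) w)
      \<in> borel_measurable ((borel \<Otimes>\<^sub>M count_space UNIV) \<Otimes>\<^sub>M borel)"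
    by measurable
  have only_d: "indicator (Sp b \<times> UNIV) z * (\<Sum>k<M. ennreal (Pk (Q \<epsilon> (fst z)) (Sp k))
        * (g (snd z) * indicator ((Sp b \<times> {d}) \<times> {0..}) ((fst z, k), snd z)))
      = ennreal (Pk (Q \<epsilon> (fst z)) (Sp d)) * g (snd z) * indicator (Sp b \<times> {0..}) z" for z :: "'a \<times> real"
  proof -
    have "(\<Sum>k<M. ennreal (Pk (Q \<epsilon> (fst z)) (Sp k))
          * (g (snd z) * indicator ((Sp b \<times> {d}) \<times> {0..}) ((fst z, k), snd z)))
        = (\<Sum>k<M. if k = d then ennreal (Pk (Q \<epsilon> (fst z)) (Sp d)) * (g (snd z)
          * indicator (Sp b \<times> {0..}) z) else 0)"
      by (intro sum.cong refl) (cases z, auto simp: indicator_def)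
    then show ?thesis
      using d by (auto simp: sum.delta indicator_def mult.assoc)
  qed
  show ?thesis
    unfolding Qbar_eq_marked_law[where Q=Q and \<epsilon>=\<epsilon>, OF Qk Sp b]
    by (subst nn_integral_marked_law[OF sQ pk Sb F]) (simp_all add: only_d)
qed

lemma reweighted_time_law_Qbar:
  fixes Q :: "real \<Rightarrow> 'a::topological_space \<Rightarrow> ('a \<times> real) measure"
  assumes Qk: "Q \<epsilon> \<in> borel \<rightarrow>\<^sub>M subprob_algebra (borel \<Otimes>\<^sub>M borel)"
    and finite: "finite_measure (Q \<epsilon> x)"
    and Sp: "\<forall>i<M. Sp i \<in> sets borel" and b: "b < M" and d: "d < M"
    and Pk_pos: "0 < Pk (Q \<epsilon> x) (Sp b)" and w0: "0 < w0" and \<eta>: "0 \<le> \<eta>" "\<eta> \<le> 1/2"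
    and close: "\<forall>y\<in>Sp b. \<bar>Pk (Q \<epsilon> y) (Sp d) / w0 - 1\<bar> \<le> \<eta>"
  shows "reweighted_time_law (Q \<epsilon> x) (Sp b) (Qbar Q Sp M \<epsilon> (x, b)) (Sp b \<times> {d})
    (\<lambda>y. Pk (Q \<epsilon> y) (Sp d)) (Pk (Q \<epsilon> x) (Sp b)) w0 \<eta>"
proof (rule reweighted_time_law.intro)
  have sQ: "sets (Q \<epsilon> x) = sets (borel \<Otimes>\<^sub>M borel)"
    by (rule sets_kernel[OF Qk]) simp
  have Sb: "Sp b \<in> sets borel"
    using Sp b by simp
  show "snd \<in> Q \<epsilon> x \<rightarrow>\<^sub>M borel"
    by (subst measurable_cong_sets[OF sQ refl]) (rule measurable_snd)
  show "Sp b \<times> {0..} \<in> sets (Q \<epsilon> x)"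
    unfolding sQ using Sb by (intro pair_measureI) simp_all
  show "snd \<in> Qbar Q Sp M \<epsilon> (x, b) \<rightarrow>\<^sub>M borel"
    by (subst measurable_cong_sets[OF sets_Qbar refl]) (rule measurable_snd)
  show "(Sp b \<times> {d}) \<times> {0..} \<in> sets (Qbar Q Sp M \<epsilon> (x, b))"
    using Sb by (simp add: pair_measureI)
  show "\<And>g. g \<in> borel_measurable borel \<Longrightarrow>
      (\<integral>\<^sup>+z. g (snd z) * indicator ((Sp b \<times> {d}) \<times> {0..}) z \<partial>Qbar Q Sp M \<epsilon> (x, b))
      = (\<integral>\<^sup>+z. ennreal (Pk (Q \<epsilon> (fst z)) (Sp d)) * g (snd z) * indicator (Sp b \<times> {0..}) z \<partial>Q \<epsilon> x)
        / ennreal (Pk (Q \<epsilon> x) (Sp b))"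
    by (rule nn_integral_Qbar_time[where Q=Q and \<epsilon>=\<epsilon>, OF Qk Sp b d])
qed (use finite Pk_pos w0 \<eta> close in auto)

section \<open>The extended process\<close>

definition allowed_jump :: "nat \<Rightarrow> (real \<Rightarrow> nat \<Rightarrow> nat \<Rightarrow> real) \<Rightarrow> nat \<Rightarrow> nat \<Rightarrow> bool" where
  "allowed_jump M P i j \<longleftrightarrow> i < M \<and> j < M \<and> i \<noteq> j \<and> not_ident_zero (\<lambda>\<epsilon>. P \<epsilon> i j)"

locale extended_process =
  fixes Q :: "real \<Rightarrow> 'a::topological_space \<Rightarrow> ('a \<times> real) measure"
    and Sp :: "nat \<Rightarrow> 'a set" and M :: nat
    and P :: "real \<Rightarrow> nat \<Rightarrow> nat \<Rightarrow> real" and tau :: "real \<Rightarrow> nat \<Rightarrow> nat \<Rightarrow> real"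
  assumes Sp_borel: "\<forall>i<M. Sp i \<in> sets borel"
    and Q_kernel: "\<And>\<epsilon>. 0 < \<epsilon> \<Longrightarrow> Q \<epsilon> \<in> borel \<rightarrow>\<^sub>M subprob_algebra (borel \<Otimes>\<^sub>M borel)"
    and Q_finite: "\<And>\<epsilon> x. 0 < \<epsilon> \<Longrightarrow> finite_measure (Q \<epsilon> x)"
    and Pk_pos: "\<And>i j \<epsilon> x. allowed_jump M P i j \<Longrightarrow> 0 < \<epsilon> \<Longrightarrow> x \<in> Sp i \<Longrightarrow> 0 < Pk (Q \<epsilon> x) (Sp j)"
    and P_pos: "\<And>i j \<epsilon>. allowed_jump M P i j \<Longrightarrow> 0 < \<epsilon> \<Longrightarrow> 0 < P \<epsilon> i j"
    and Pk_ratio_limit: "\<And>i j. allowed_jump M P i j \<Longrightarrow>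
      uniform_limit (Sp i) (\<lambda>\<epsilon> x. Pk (Q \<epsilon> x) (Sp j) / P \<epsilon> i j) (\<lambda>_. 1) (at_right 0)"
    and ET_ratio_limit: "\<And>i j. allowed_jump M P i j \<Longrightarrow>
      uniform_limit (Sp i) (\<lambda>\<epsilon> x. ET (Q \<epsilon> x) (Sp j) / tau \<epsilon> i j) (\<lambda>_. 1) (at_right 0)"
begin

lemma reweighted_time_law_Qbar_jump:
  assumes ab: "allowed_jump M P a b" and bd: "allowed_jump M P b d"
    and \<epsilon>: "0 < \<epsilon>" and x: "x \<in> Sp a" and \<eta>: "0 \<le> \<eta>" "\<eta> \<le> 1/2"
    and close: "\<forall>y\<in>Sp b. \<bar>Pk (Q \<epsilon> y) (Sp d) / P \<epsilon> b d - 1\<bar> \<le> \<eta>"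
  shows "reweighted_time_law (Q \<epsilon> x) (Sp b) (Qbar Q Sp M \<epsilon> (x, b)) (Sp b \<times> {d})
    (\<lambda>y. Pk (Q \<epsilon> y) (Sp d)) (Pk (Q \<epsilon> x) (Sp b)) (P \<epsilon> b d) \<eta>"
  using bd
  by (intro reweighted_time_law_Qbar[where Q=Q and \<epsilon>=\<epsilon>, OF Q_kernel[OF \<epsilon>] Q_finite[OF \<epsilon>]
        Sp_borel _ _ Pk_pos[OF ab \<epsilon> x] P_pos[OF bd \<epsilon>] \<eta> close])
    (simp_all add: allowed_jump_def)

lemma eventually_Pk_ratio_close:
  assumes "allowed_jump M P b d" and "0 < \<eta>"
  shows "\<forall>\<^sub>F \<epsilon> in at_right 0. \<forall>y\<in>Sp b. \<bar>Pk (Q \<epsilon> y) (Sp d) / P \<epsilon> b d - 1\<bar> \<le> \<eta>"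
  using uniform_limitD[OF Pk_ratio_limit[OF assms(1)] assms(2)]
  by eventually_elim (simp add: dist_real_def less_imp_le)

lemma eventually_ET_ratio_close:
  assumes "allowed_jump M P a b" and "0 < \<delta>"
  shows "\<forall>\<^sub>F \<epsilon> in at_right 0. \<forall>x\<in>Sp a. \<bar>ET (Q \<epsilon> x) (Sp b) / tau \<epsilon> a b - 1\<bar> < \<delta>"
  using uniform_limitD[OF ET_ratio_limit[OF assms(1)] assms(2)]
  by eventually_elim (simp add: dist_real_def)

lemma uniform_limit_ET_Qbar:
  assumes ab: "allowed_jump M P a b" and bd: "allowed_jump M P b d"
  shows "uniform_limit (Sp a \<times> {b})
    (\<lambda>\<epsilon> xb. ET (Qbar Q Sp M \<epsilon> xb) (Sp b \<times> {d}) / tau \<epsilon> a b) (\<lambda>_. 1) (at_right 0)"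
proof (rule uniform_limitI)
  fix e :: real assume e: "0 < e"
  define \<eta> \<delta> where "\<eta> = min (1/2) (e/16)" and "\<delta> = min (1/2) (e/2)"
  have \<eta>: "0 < \<eta>" "\<eta> \<le> 1/2" and \<delta>: "0 < \<delta>" "\<delta> \<le> 1/2" and "6 * \<eta> + \<delta> < e"
    using e by (auto simp: \<eta>_def \<delta>_def)
  show "\<forall>\<^sub>F \<epsilon> in at_right 0. \<forall>xb\<in>Sp a \<times> {b}.
    dist (ET (Qbar Q Sp M \<epsilon> xb) (Sp b \<times> {d}) / tau \<epsilon> a b) 1 < e"
    using eventually_Pk_ratio_close[OF bd \<eta>(1)] eventually_ET_ratio_close[OF ab \<delta>(1)]
      eventually_at_right_less[of 0]
  proof eventually_elim
    case (elim \<epsilon>)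
    show ?case
    proof
      fix xb assume "xb \<in> Sp a \<times> {b}"
      then obtain x where xb: "xb = (x, b)" and x: "x \<in> Sp a" by auto
      have R: "reweighted_time_law (Q \<epsilon> x) (Sp b) (Qbar Q Sp M \<epsilon> (x, b)) (Sp b \<times> {d})
          (\<lambda>y. Pk (Q \<epsilon> y) (Sp d)) (Pk (Q \<epsilon> x) (Sp b)) (P \<epsilon> b d) \<eta>"
        using reweighted_time_law_Qbar_jump[OF ab bd elim(3) x] \<eta> elim(1) by simp
      have ratio: "\<bar>ET (Q \<epsilon> x) (Sp b) / tau \<epsilon> a b - 1\<bar> < \<delta>"
        using elim(2) x by simp
      then have "ET (Q \<epsilon> x) (Sp b) \<noteq> 0"
        using \<delta> by auto
      then have "\<bar>ET (Qbar Q Sp M \<epsilon> (x, b)) (Sp b \<times> {d}) / tau \<epsilon> a b - 1\<bar> < 6 * \<eta> + \<delta>"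
        using reweighted_time_law.ET_L_close[OF R] reweighted_time_law.ET_K_nonneg[OF R] ratio \<delta> \<eta>
        by (intro abs_div_sub_one_lt) simp_all
      then show "dist (ET (Qbar Q Sp M \<epsilon> xb) (Sp b \<times> {d}) / tau \<epsilon> a b) 1 < e"
        using \<open>6 * \<eta> + \<delta> < e\<close> by (simp add: xb dist_real_def)
    qed
  qed
qed

lemma eventually_VarT_Qbar_le:
  assumes ab: "allowed_jump M P a b" and bd: "allowed_jump M P b d"
    and VarT_le: "\<forall>\<^sub>F \<epsilon> in at_right 0. \<forall>x\<in>Sp a. VarT (Q \<epsilon> x) (Sp b) \<le> ennreal (C * (tau \<epsilon> a b)\<^sup>2)"
  shows "\<forall>\<^sub>F \<epsilon> in at_right 0. \<forall>x\<in>Sp a.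
    VarT (Qbar Q Sp M \<epsilon> (x, b)) (Sp b \<times> {d}) \<le> ennreal ((6 * max C 0 + 54) * (tau \<epsilon> a b)\<^sup>2)"
  using eventually_Pk_ratio_close[OF bd, of "1/2", simplified]
    eventually_ET_ratio_close[OF ab, of "1/2", simplified] eventually_at_right_less[of 0] VarT_le
proof eventually_elim
  case (elim \<epsilon>)
  show ?case
  proof
    fix x assume x: "x \<in> Sp a"
    define t where "t = tau \<epsilon> a b"
    have R: "reweighted_time_law (Q \<epsilon> x) (Sp b) (Qbar Q Sp M \<epsilon> (x, b)) (Sp b \<times> {d})
        (\<lambda>y. Pk (Q \<epsilon> y) (Sp d)) (Pk (Q \<epsilon> x) (Sp b)) (P \<epsilon> b d) (1/2)"
      using reweighted_time_law_Qbar_jump[OF ab bd elim(3) x] elim(1) by simp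
    have "VarT (Qbar Q Sp M \<epsilon> (x, b)) (Sp b \<times> {d}) \<le> ennreal 6 * VarT (Q \<epsilon> x) (Sp b) + ennreal (54 * t\<^sup>2)"
      using reweighted_time_law.VarT_L_le_scale[OF R] elim(2) x by (simp add: t_def)
    also have "\<dots> \<le> ennreal 6 * ennreal (C * t\<^sup>2) + ennreal (54 * t\<^sup>2)"
      using elim(4) x by (intro add_right_mono mult_left_mono) (simp_all add: t_def)
    also have "\<dots> \<le> ennreal (6 * max C 0 * t\<^sup>2) + ennreal (54 * t\<^sup>2)"
      by (subst ennreal_mult'[symmetric]) (simp_all add: ennreal_leI mult_right_mono)
    also have "\<dots> = ennreal (6 * max C 0 * t\<^sup>2 + 54 * t\<^sup>2)"
      by (rule ennreal_plus[symmetric]) simp_all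
    also have "\<dots> = ennreal ((6 * max C 0 + 54) * (tau \<epsilon> a b)\<^sup>2)"
      by (simp add: distrib_right t_def)
    finally show "VarT (Qbar Q Sp M \<epsilon> (x, b)) (Sp b \<times> {d})
        \<le> ennreal ((6 * max C 0 + 54) * (tau \<epsilon> a b)\<^sup>2)" .
  qed
qed

lemma VarT_Qbar_uniformly_bounded:
  assumes "0 < \<epsilon>0" and VarT_le: "\<And>a b \<epsilon> x. allowed_jump M P a b \<Longrightarrow> 0 < \<epsilon> \<Longrightarrow> \<epsilon> \<le> \<epsilon>0 \<Longrightarrow>
    x \<in> Sp a \<Longrightarrow> VarT (Q \<epsilon> x) (Sp b) \<le> ennreal (C * (tau \<epsilon> a b)\<^sup>2)"
  shows "\<exists>\<epsilon>1>0. \<forall>a b d \<epsilon> x. allowed_jump M P a b \<and> allowed_jump M P b d \<and> 0 < \<epsilon> \<and> \<epsilon> \<le> \<epsilon>1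
    \<and> x \<in> Sp a \<longrightarrow> VarT (Qbar Q Sp M \<epsilon> (x, b)) (Sp b \<times> {d}) \<le> ennreal ((6 * max C 0 + 54) * (tau \<epsilon> a b)\<^sup>2)"
proof -
  define jumps where "jumps = {(a, b, d). allowed_jump M P a b \<and> allowed_jump M P b d}"
  have "finite jumps"
    by (rule finite_subset[of _ "{..<M} \<times> {..<M} \<times> {..<M}"]) (auto simp: jumps_def allowed_jump_def)
  moreover have "\<forall>\<^sub>F \<epsilon> in at_right 0. \<forall>x\<in>Sp a. VarT (Q \<epsilon> x) (Sp b) \<le> ennreal (C * (tau \<epsilon> a b)\<^sup>2)"
    if "allowed_jump M P a b" for a b
    unfolding eventually_at_right_field using \<open>0 < \<epsilon>0\<close> VarT_le[OF that] by (intro exI[of _ \<epsilon>0]) auto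
  ultimately have "\<forall>\<^sub>F \<epsilon> in at_right 0. \<forall>(a, b, d) \<in> jumps. \<forall>x\<in>Sp a.
      VarT (Qbar Q Sp M \<epsilon> (x, b)) (Sp b \<times> {d}) \<le> ennreal ((6 * max C 0 + 54) * (tau \<epsilon> a b)\<^sup>2)"
    by (intro eventually_ball_finite) (auto simp: jumps_def intro: eventually_VarT_Qbar_le)
  then obtain \<epsilon>1 where "0 < \<epsilon>1" and \<epsilon>1: "\<And>\<epsilon>. 0 < \<epsilon> \<Longrightarrow> \<epsilon> < \<epsilon>1 \<Longrightarrow> \<forall>(a, b, d) \<in> jumps.
      \<forall>x\<in>Sp a. VarT (Qbar Q Sp M \<epsilon> (x, b)) (Sp b \<times> {d}) \<le> ennreal ((6 * max C 0 + 54) * (tau \<epsilon> a b)\<^sup>2)"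
    unfolding eventually_at_right_field by auto
  then show ?thesis
    by (intro exI[of _ "\<epsilon>1 / 2"]) (force simp: jumps_def)
qed

end

lemma extended_processI:
  fixes Q :: "real \<Rightarrow> 'a::topological_space \<Rightarrow> ('a \<times> real) measure"
  assumes "\<forall>i<M. Sp i \<in> sets borel"
    and "\<forall>\<epsilon>>0. Q \<epsilon> \<in> borel \<rightarrow>\<^sub>M subprob_algebra (borel \<Otimes>\<^sub>M borel)"
    and "\<forall>\<epsilon>>0. \<forall>x. prob_space (Q \<epsilon> x)"
    and cond_ii: "\<forall>i<M. \<forall>j<M. i \<noteq> j \<longrightarrow>
        ((\<forall>\<epsilon>>0. \<forall>x\<in>Sp i. Pk (Q \<epsilon> x) (Sp j) = 0) \<and> (\<forall>\<epsilon>>0. P \<epsilon> i j = 0))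
      \<or> ((\<forall>\<epsilon>>0. \<forall>x\<in>Sp i. Pk (Q \<epsilon> x) (Sp j) > 0) \<and> (\<forall>\<epsilon>>0. P \<epsilon> i j > 0) \<and>
         uniform_limit (Sp i) (\<lambda>\<epsilon> x. Pk (Q \<epsilon> x) (Sp j) / P \<epsilon> i j) (\<lambda>_. 1) (at_right 0))"
    and "\<forall>i<M. \<forall>j<M. i \<noteq> j \<and> not_ident_zero (\<lambda>\<epsilon>. P \<epsilon> i j) \<longrightarrow>
        uniform_limit (Sp i) (\<lambda>\<epsilon> x. ET (Q \<epsilon> x) (Sp j) / tau \<epsilon> i j) (\<lambda>_. 1) (at_right 0)"
  shows "extended_process Q Sp M P tau"
proof -
  have positive: "(\<forall>\<epsilon>>0. \<forall>x\<in>Sp i. 0 < Pk (Q \<epsilon> x) (Sp j)) \<and> (\<forall>\<epsilon>>0. 0 < P \<epsilon> i j)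
      \<and> uniform_limit (Sp i) (\<lambda>\<epsilon> x. Pk (Q \<epsilon> x) (Sp j) / P \<epsilon> i j) (\<lambda>_. 1) (at_right 0)"
    if "allowed_jump M P i j" for i j
  proof -
    have "i < M" "j < M" "i \<noteq> j" "\<not> (\<forall>\<epsilon>>0. P \<epsilon> i j = 0)"
      using that by (auto simp: allowed_jump_def not_ident_zero_def)
    then show ?thesis
      using cond_ii by blast
  qed
  show ?thesis
  proof (rule extended_process.intro)
    show "finite_measure (Q \<epsilon> x)" if "0 < \<epsilon>" for \<epsilon> x
      using assms(3) that by (simp add: prob_space_def)
    show "0 < Pk (Q \<epsilon> x) (Sp j)" if "allowed_jump M P i j" "0 < \<epsilon>" "x \<in> Sp i" for i j \<epsilon> x
      using positive[OF that(1)] that(2,3) by blast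
  qed (use assms(1,2,5) positive in \<open>simp_all add: allowed_jump_def\<close>)
qed

lemma not_ident_zero_PbarD: "not_ident_zero (\<lambda>\<epsilon>. Pbar P \<epsilon> (a, b) (c, d)) \<Longrightarrow> c = b"
  by (auto simp: not_ident_zero_def Pbar_def split: if_splits)

theorem lemma4p1:
  fixes Q :: "real \<Rightarrow> 'a::metric_space \<Rightarrow> ('a \<times> real) measure"
    and Sp :: "nat \<Rightarrow> 'a set" and M :: nat
    and P :: "real \<Rightarrow> nat \<Rightarrow> nat \<Rightarrow> real"
    and tau :: "real \<Rightarrow> nat \<Rightarrow> nat \<Rightarrow> real"
  assumes part_borel: "\<forall>i<M. Sp i \<in> sets borel"
    and part_disj: "disjoint_family_on Sp {..<M}"
    and part_cover: "(\<Union>i<M. Sp i) = UNIV"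
    and Q_kernel: "\<forall>\<epsilon>>0. Q \<epsilon> \<in> borel \<rightarrow>\<^sub>M subprob_algebra (borel \<Otimes>\<^sub>M borel)"
    and Q_prob: "\<forall>\<epsilon>>0. \<forall>x. prob_space (Q \<epsilon> x)"
    and Q_support: "\<forall>\<epsilon>>0. \<forall>x. emeasure (Q \<epsilon> x) (UNIV \<times> {..<0}) = 0"
    and cond_i: "\<forall>\<epsilon>>0. \<forall>i<M. \<forall>x\<in>Sp i. Pk (Q \<epsilon> x) (Sp i) = 0"
    and cond_ii: "\<forall>i<M. \<forall>j<M. i \<noteq> j \<longrightarrow>
        ((\<forall>\<epsilon>>0. \<forall>x\<in>Sp i. Pk (Q \<epsilon> x) (Sp j) = 0) \<and> (\<forall>\<epsilon>>0. P \<epsilon> i j = 0))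
      \<or> ((\<forall>\<epsilon>>0. \<forall>x\<in>Sp i. Pk (Q \<epsilon> x) (Sp j) > 0) \<and> (\<forall>\<epsilon>>0. P \<epsilon> i j > 0) \<and>
         uniform_limit (Sp i) (\<lambda>\<epsilon> x. Pk (Q \<epsilon> x) (Sp j) / P \<epsilon> i j) (\<lambda>_. 1) (at_right 0))"
    and cond_ii_sum: "\<forall>\<epsilon>>0. \<forall>i<M. (\<Sum>j\<in>{..<M} - {i}. P \<epsilon> i j) = 1"
    and cond_iii: "\<forall>i<M. \<forall>j<M. i \<noteq> j \<longrightarrow>
        (i, j) \<in> {(a, b). a < M \<and> b < M \<and> a \<noteq> b \<and> not_ident_zero (\<lambda>\<epsilon>. P \<epsilon> a b)}\<^sup>+"
    and cond_iv: "\<forall>i<M. \<forall>j<M. i \<noteq> j \<and> not_ident_zero (\<lambda>\<epsilon>. P \<epsilon> i j) \<longrightarrow>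
        uniform_limit (Sp i) (\<lambda>\<epsilon> x. ET (Q \<epsilon> x) (Sp j) / tau \<epsilon> i j) (\<lambda>_. 1) (at_right 0)"
    and cond_v: "\<exists>C \<epsilon>0. \<epsilon>0 > 0 \<and> (\<forall>i<M. \<forall>j<M. \<forall>\<epsilon>. \<forall>x\<in>Sp i.
        i \<noteq> j \<and> not_ident_zero (\<lambda>\<epsilon>. P \<epsilon> i j) \<and> 0 < \<epsilon> \<and> \<epsilon> \<le> \<epsilon>0 \<longrightarrow>
        VarT (Q \<epsilon> x) (Sp j) \<le> ennreal (C * (tau \<epsilon> i j)\<^sup>2))"
  shows "\<exists>taubar :: real \<Rightarrow> nat \<times> nat \<Rightarrow> real.
     (\<forall>a<M. \<forall>b<M. \<forall>c<M. \<forall>d<M.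
        a \<noteq> b \<and> not_ident_zero (\<lambda>\<epsilon>. P \<epsilon> a b) \<and>
        c \<noteq> d \<and> not_ident_zero (\<lambda>\<epsilon>. P \<epsilon> c d) \<and>
        not_ident_zero (\<lambda>\<epsilon>. Pbar P \<epsilon> (a, b) (c, d)) \<longrightarrow>
        uniform_limit (Sp a \<times> {b})
          (\<lambda>\<epsilon> xb. ET (Qbar Q Sp M \<epsilon> xb) (Sp c \<times> {d}) / taubar \<epsilon> (a, b)) (\<lambda>_. 1) (at_right 0))
   \<and> (\<exists>C \<epsilon>0. C > 0 \<and> \<epsilon>0 > 0 \<and>
        (\<forall>a<M. \<forall>b<M. \<forall>c<M. \<forall>d<M. \<forall>\<epsilon>. \<forall>xb\<in>Sp a \<times> {b}.
          a \<noteq> b \<and> not_ident_zero (\<lambda>\<epsilon>. P \<epsilon> a b) \<and>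
          c \<noteq> d \<and> not_ident_zero (\<lambda>\<epsilon>. P \<epsilon> c d) \<and>
          not_ident_zero (\<lambda>\<epsilon>. Pbar P \<epsilon> (a, b) (c, d)) \<and> 0 < \<epsilon> \<and> \<epsilon> \<le> \<epsilon>0 \<longrightarrow>
          VarT (Qbar Q Sp M \<epsilon> xb) (Sp c \<times> {d}) \<le> ennreal (C * (taubar \<epsilon> (a, b))\<^sup>2)))"
proof -
  interpret extended_process Q Sp M P tau
    by (rule extended_processI[OF part_borel Q_kernel Q_prob cond_ii cond_iv])
  obtain C \<epsilon>0 where "0 < \<epsilon>0" and "\<forall>i<M. \<forall>j<M. \<forall>\<epsilon>. \<forall>x\<in>Sp i.
      i \<noteq> j \<and> not_ident_zero (\<lambda>\<epsilon>. P \<epsilon> i j) \<and> 0 < \<epsilon> \<and> \<epsilon> \<le> \<epsilon>0 \<longrightarrow>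
      VarT (Q \<epsilon> x) (Sp j) \<le> ennreal (C * (tau \<epsilon> i j)\<^sup>2)"
    using cond_v by blast
  then obtain \<epsilon>1 where "0 < \<epsilon>1" and VarT_Qbar: "\<forall>a b d \<epsilon> x. allowed_jump M P a b \<and> allowed_jump M P b d
      \<and> 0 < \<epsilon> \<and> \<epsilon> \<le> \<epsilon>1 \<and> x \<in> Sp a \<longrightarrow>
      VarT (Qbar Q Sp M \<epsilon> (x, b)) (Sp b \<times> {d}) \<le> ennreal ((6 * max C 0 + 54) * (tau \<epsilon> a b)\<^sup>2)"
    using VarT_Qbar_uniformly_bounded[of \<epsilon>0 C] by (auto simp: allowed_jump_def)
  show ?thesis
  proof (rule exI[of _ "\<lambda>\<epsilon> ab. tau \<epsilon> (fst ab) (snd ab)"], rule conjI, goal_cases)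
    case 1
    show ?case
      using uniform_limit_ET_Qbar by (auto simp: allowed_jump_def dest!: not_ident_zero_PbarD)
  next
    case 2
    show ?case
      by (rule exI[of _ "6 * max C 0 + 54"], rule exI[of _ \<epsilon>1])
        (use VarT_Qbar \<open>0 < \<epsilon>1\<close> in \<open>auto simp: allowed_jump_def dest!: not_ident_zero_PbarD\<close>)
  qed
qed

end
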